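(* Let $\mathfrak{n}=\mathfrak{v}\oplus\mathfrak{z}$ be a fat 2-step nilpotent real Lie algebra with center $\mathfrak{z}$ of dimension $m$. Then $$\dim\big(\operatorname{Aut}(\mathfrak{n})/\operatorname{Aut}_0(\mathfrak{n})\big)\le 1+m(m-1)/2,$$ with equality achieved for any algebra of Heisenberg type of the same dimension and with center of the same dimension.
   Context: $\mathfrak{n}=\mathfrak{v}\oplus\mathfrak{z}$ with bracket $[\ ,\ ]:\mathfrak{v}\times\mathfrak{v}\to\mathfrak{z}$, $\mathfrak{z}$ the center. Fat: for every nonzero $\lambda\in\mathfrak{z}^*$ the form $\lambda([u,v])$ on $\mathfrak{v}$ is non-degenerate. $\operatorname{Aut}(\mathfrak{n})$ is the Lie algebra automorphism group and $\operatorname{Aut}_0(\mathfrak{n})$ its normal subgroup of automorphisms acting trivially on the center $\mathfrak{z}$. $\mathfrak{n}$ is of Heisenberg type if there are inner products on $\mathfrak{v},\mathfrak{z}$ such that $T_z$ defined by $\langle T_zu,v\rangle=\langle z,[u,v]\rangle$ satisfies $T_z^2=-|z|^2I$ for all $z\in\mathfrak{z}$. *)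

theory Defs
  imports "HOL-Analysis.Analysis"
begin

text \<open>A 2-step nilpotent real Lie algebra n = v + z is given by a skew-symmetric bilinear
  map B : v x v -> z; the Lie bracket on the product space is
  [(u,a),(w,b)] = (0, B u w).\<close>

definition nil_bracket :: "('v::real_vector \<Rightarrow> 'v \<Rightarrow> 'z::real_vector) \<Rightarrow> 'v \<times> 'z \<Rightarrow> 'v \<times> 'z \<Rightarrow> 'v \<times> 'z" where
  "nil_bracket B x y = (0, B (fst x) (fst y))"

definition skew_bilinear :: "('v::real_vector \<Rightarrow> 'v \<Rightarrow> 'z::real_vector) \<Rightarrow> bool" where
  "skew_bilinear B \<longleftrightarrow> bilinear B \<and> (\<forall>u. B u u = 0)"

text \<open>z is the center of n (i.e. no nonzero element of v is central).\<close>
definition center_is_z :: "('v::real_vector \<Rightarrow> 'v \<Rightarrow> 'z::real_vector) \<Rightarrow> bool" where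
  "center_is_z B \<longleftrightarrow> (\<forall>u. (\<forall>w. B u w = 0) \<longrightarrow> u = 0)"

definition fat :: "('v::real_vector \<Rightarrow> 'v \<Rightarrow> 'z::real_vector) \<Rightarrow> bool" where
  "fat B \<longleftrightarrow> (\<forall>l::'z \<Rightarrow> real. linear l \<and> (\<exists>a. l a \<noteq> 0) \<longrightarrow>
      (\<forall>u. (\<forall>w. l (B u w) = 0) \<longrightarrow> u = 0))"

definition inner_product_form :: "('a::real_vector \<Rightarrow> 'a \<Rightarrow> real) \<Rightarrow> bool" where
  "inner_product_form g \<longleftrightarrow> bilinear g \<and> (\<forall>x y. g x y = g y x) \<and> (\<forall>x. x \<noteq> 0 \<longrightarrow> g x x > 0)"

definition heisenberg_type :: "('v::real_vector \<Rightarrow> 'v \<Rightarrow> 'z::real_vector) \<Rightarrow> bool" where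
  "heisenberg_type B \<longleftrightarrow> skew_bilinear B \<and>
     (\<exists>gv gz. inner_product_form gv \<and> inner_product_form gz \<and>
        (\<forall>z. \<exists>T. linear T \<and> (\<forall>u w. gv (T u) w = gz z (B u w)) \<and>
                 (\<forall>u. T (T u) = - (gz z z) *\<^sub>R u)))"

definition Aut :: "('v::euclidean_space \<Rightarrow> 'v \<Rightarrow> 'z::euclidean_space) \<Rightarrow> (('v \<times> 'z) \<Rightarrow>\<^sub>L ('v \<times> 'z)) set" where
  "Aut B = {f. bij (blinfun_apply f) \<and>
     (\<forall>x y. f (nil_bracket B x y) = nil_bracket B (f x) (f y))}"

definition Aut0 :: "('v::euclidean_space \<Rightarrow> 'v \<Rightarrow> 'z::euclidean_space) \<Rightarrow> (('v \<times> 'z) \<Rightarrow>\<^sub>L ('v \<times> 'z)) set" where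
  "Aut0 B = {f \<in> Aut B. \<forall>a. f (0, a) = (0, a)}"

definition lie_alg :: "('a::real_normed_vector \<Rightarrow>\<^sub>L 'a) set \<Rightarrow> ('a \<Rightarrow>\<^sub>L 'a) set" where
  "lie_alg G = {X. \<exists>\<gamma>. \<gamma> 0 = id_blinfun \<and> (\<forall>t. \<gamma> t \<in> G) \<and> (\<gamma> has_vector_derivative X) (at 0)}"

text \<open>Dimension of the Lie group Aut(n)/Aut_0(n) = dim Aut(n) - dim Aut_0(n).\<close>
definition dim_Aut_quot :: "('v::euclidean_space \<Rightarrow> 'v \<Rightarrow> 'z::euclidean_space) \<Rightarrow> real" where
  "dim_Aut_quot B = real (dim (lie_alg (Aut B))) - real (dim (lie_alg (Aut0 B)))"

end

theory Submission
  imports Defs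
begin

text \<open>
  The Lie algebra of \<open>Aut(n)\<close> is the space of derivations of \<open>n\<close>, and that of \<open>Aut\<^sub>0(n)\<close>
  the space of derivations vanishing on \<open>z\<close>: one inclusion comes from differentiating curves of
  automorphisms, the other from exponentiating derivations. For fat \<open>n\<close> the brackets span \<open>z\<close>,
  so every derivation \<open>D\<close> preserves \<open>z\<close>, and the quotient has the dimension of the space \<open>W\<close> of
  restrictions \<open>A = D|\<^sub>z\<close>. Such an \<open>A\<close> satisfies \<open>A[u,w] = [a u,w] + [u,a w]\<close> with \<open>a = D|\<^sub>v\<close>.
  If \<open>A\<close> is symmetric and \<open>A l = \<nu> l\<close>, pairing with \<open>l\<close> gives
  \<open>\<nu> \<omega>(u,w) = \<omega>(a u,w) + \<omega>(u,a w)\<close> for the form \<open>\<omega> = \<langle>l,[\<cdot>,\<cdot>]\<rangle>\<close>, which is non-degenerate by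
  fatness; taking traces yields \<open>\<nu> dim v = 2 tr a\<close>. So all eigenvalues of \<open>A\<close> coincide and \<open>A\<close>
  is scalar. Hence \<open>A \<mapsto> A - A\<^sup>T\<close> has at most one-dimensional kernel on \<open>W\<close> and takes values in
  the skew maps, which gives the bound. For an algebra of Heisenberg type the dilation
  \<open>(u,z) \<mapsto> (u,2z)\<close> and the derivations \<open>((J\<^sub>x J\<^sub>y - J\<^sub>y J\<^sub>x)/4, z \<mapsto> \<langle>x,z\<rangle>y - \<langle>y,z\<rangle>x)\<close> show that
  the kernel is one-dimensional and every skew map is attained.
\<close>

section \<open>The exponential curve of a bounded endomorphism\<close>

text \<open>A copy of \<open>'a \<Rightarrow>\<^sub>L 'a\<close> with composition as multiplication, so that the library's
  \<open>exp\<close> on Banach algebras applies.\<close>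

typedef (overloaded) 'a endo = "UNIV :: ('a::euclidean_space \<Rightarrow>\<^sub>L 'a) set"
  morphisms Rep_endo Abs_endo by simp

setup_lifting type_definition_endo

instantiation endo :: (euclidean_space) real_normed_vector
begin
lift_definition norm_endo :: "'a endo \<Rightarrow> real" is norm .
lift_definition minus_endo :: "'a endo \<Rightarrow> 'a endo \<Rightarrow> 'a endo" is "(-)" .
lift_definition plus_endo :: "'a endo \<Rightarrow> 'a endo \<Rightarrow> 'a endo" is "(+)" .
lift_definition uminus_endo :: "'a endo \<Rightarrow> 'a endo" is "uminus" .
lift_definition zero_endo :: "'a endo" is 0 .
lift_definition scaleR_endo :: "real \<Rightarrow> 'a endo \<Rightarrow> 'a endo" is scaleR .
definition dist_endo :: "'a endo \<Rightarrow> 'a endo \<Rightarrow> real" where "dist_endo a b = norm (a - b)"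
definition uniformity_endo :: "('a endo \<times> 'a endo) filter" where
  "uniformity_endo = (INF e\<in>{0 <..}. principal {(x, y). dist x y < e})"
definition open_endo :: "'a endo set \<Rightarrow> bool" where
  "open_endo S = (\<forall>x\<in>S. \<forall>\<^sub>F (x', y) in uniformity. x' = x \<longrightarrow> y \<in> S)"
definition sgn_endo :: "'a endo \<Rightarrow> 'a endo" where "sgn_endo x = scaleR (inverse (norm x)) x"
instance
  apply standard
  unfolding dist_endo_def open_endo_def sgn_endo_def uniformity_endo_def
  apply (rule refl | (transfer, force simp: norm_triangle_ineq algebra_simps scaleR_add_right
        scaleR_add_left))+
  done
end

instantiation endo :: (euclidean_space) real_normed_algebra_1
begin
lift_definition times_endo :: "'a endo \<Rightarrow> 'a endo \<Rightarrow> 'a endo" is "(o\<^sub>L)" .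
lift_definition one_endo :: "'a endo" is id_blinfun .
instance
  apply standard
  apply (transfer; rule blinfun_eqI; simp add: blinfun.bilinear_simps)+
  apply (transfer, metis norm_blinfun_id norm_zero zero_neq_one)
  apply (transfer, rule norm_blinfun_compose)
  apply (transfer, simp)
  done
end

lemma tendsto_Rep_endo_iff: "(X \<longlongrightarrow> L) F \<longleftrightarrow> ((\<lambda>n. Rep_endo (X n)) \<longlongrightarrow> Rep_endo L) F"
  unfolding tendsto_iff dist_norm
  by (simp add: minus_endo.rep_eq[symmetric] norm_endo.rep_eq[symmetric])

instance endo :: (euclidean_space) banach
proof
  fix X :: "nat \<Rightarrow> 'a endo"
  assume "Cauchy X"
  then have "Cauchy (\<lambda>n. Rep_endo (X n))"
    unfolding Cauchy_def dist_norm
    by (simp add: minus_endo.rep_eq[symmetric] norm_endo.rep_eq[symmetric])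
  then obtain L where "(\<lambda>n. Rep_endo (X n)) \<longlonglongrightarrow> L"
    using Cauchy_convergent_iff convergent_def by blast
  then have "X \<longlonglongrightarrow> Abs_endo L"
    unfolding tendsto_Rep_endo_iff by (simp add: Abs_endo_inverse)
  then show "convergent X" by (auto simp: convergent_def)
qed

lemma bounded_linear_Rep_endo: "bounded_linear Rep_endo"
  by (rule bounded_linear_intro[where K=1]) (transfer, simp)+

definition exp_curve :: "('a::euclidean_space \<Rightarrow>\<^sub>L 'a) \<Rightarrow> real \<Rightarrow> ('a \<Rightarrow>\<^sub>L 'a)" where
  "exp_curve D t = Rep_endo (exp (t *\<^sub>R Abs_endo D))"

lemma exp_curve_0 [simp]: "exp_curve D 0 = id_blinfun"
  by (simp add: exp_curve_def one_endo.rep_eq)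

lemma exp_curve_uminus: "exp_curve (- D) t = exp_curve D (- t)"
proof -
  have "Abs_endo (- D) = - Abs_endo D"
    by (simp add: uminus_endo.abs_eq eq_onp_def)
  then show ?thesis by (simp add: exp_curve_def)
qed

lemma exp_curve_commute: "exp_curve D t o\<^sub>L D = D o\<^sub>L exp_curve D t"
proof -
  have "exp (t *\<^sub>R Abs_endo D) * Abs_endo D = Abs_endo D * exp (t *\<^sub>R Abs_endo D)"
    using vector_derivative_unique_at[OF exp_scaleR_has_vector_derivative_right
        exp_scaleR_has_vector_derivative_left] .
  then have "Rep_endo (exp (t *\<^sub>R Abs_endo D) * Abs_endo D) =
      Rep_endo (Abs_endo D * exp (t *\<^sub>R Abs_endo D))"
    by simp
  then show ?thesis by (simp add: exp_curve_def times_endo.rep_eq Abs_endo_inverse)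
qed

lemma exp_curve_inverse: "exp_curve D (- t) (exp_curve D t x) = x"
proof -
  have "exp ((- t) *\<^sub>R Abs_endo D) * exp (t *\<^sub>R Abs_endo D) = 1"
    using exp_minus_inverse[of "- (t *\<^sub>R Abs_endo D)"] by simp
  then have "Rep_endo (exp ((- t) *\<^sub>R Abs_endo D) * exp (t *\<^sub>R Abs_endo D)) = Rep_endo 1"
    by simp
  then have "exp_curve D (- t) o\<^sub>L exp_curve D t = id_blinfun"
    by (simp add: exp_curve_def times_endo.rep_eq one_endo.rep_eq)
  then show ?thesis
    using blinfun_apply_blinfun_compose[of "exp_curve D (- t)" "exp_curve D t" x] by simp
qed

lemma bij_exp_curve: "bij (blinfun_apply (exp_curve D t))"
  using exp_curve_inverse[of D t] exp_curve_inverse[of D "- t"]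
  by (intro o_bij[where g="blinfun_apply (exp_curve D (- t))"]) auto

lemma has_vector_derivative_blinfun_apply:
  "(\<gamma> has_vector_derivative X) F \<Longrightarrow> ((\<lambda>t. blinfun_apply (\<gamma> t) x) has_vector_derivative X x) F"
  by (rule bounded_linear.has_vector_derivative[OF blinfun.bounded_linear_left])

lemma exp_curve_has_vector_derivative:
  "(exp_curve D has_vector_derivative (exp_curve D t o\<^sub>L D)) (at t)"
  using bounded_linear.has_vector_derivative[OF bounded_linear_Rep_endo
      exp_scaleR_has_vector_derivative_right[where t=t and A="Abs_endo D"]]
  unfolding exp_curve_def[abs_def] by (simp add: times_endo.rep_eq Abs_endo_inverse)

lemma exp_curve_apply_has_vector_derivative:
  "((\<lambda>t. exp_curve D t x) has_vector_derivative D (exp_curve D t x)) (at t)"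
  using has_vector_derivative_blinfun_apply[OF exp_curve_has_vector_derivative[of D t], of x]
  by (simp add: exp_curve_commute)

lemma exp_curve_has_vector_derivative_0: "(exp_curve D has_vector_derivative D) (at 0)"
proof -
  have "id_blinfun o\<^sub>L D = D" by (rule blinfun_eqI) simp
  then show ?thesis using exp_curve_has_vector_derivative[of D 0] by simp
qed

lemma has_vector_derivative_zero_imp_eq:
  fixes f :: "real \<Rightarrow> 'a::real_normed_vector"
  assumes "\<And>s. (f has_vector_derivative 0) (at s)"
  shows "f t = f 0"
proof -
  obtain c where "\<And>s. s \<in> UNIV \<Longrightarrow> f s = c"
    using has_vector_derivative_zero_constant[OF convex_UNIV, of f] assms by auto
  then show ?thesis by simp
qed

section \<open>Derivations and the Lie algebras of \<open>Aut(n)\<close> and \<open>Aut\<^sub>0(n)\<close>\<close>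

definition Der ::
    "('v::euclidean_space \<Rightarrow> 'v \<Rightarrow> 'z::euclidean_space) \<Rightarrow> (('v \<times> 'z) \<Rightarrow>\<^sub>L ('v \<times> 'z)) set" where
  "Der B = {D :: ('v \<times> 'z) \<Rightarrow>\<^sub>L ('v \<times> 'z).
     \<forall>x y. D (nil_bracket B x y) = nil_bracket B (D x) y + nil_bracket B x (D y)}"

definition Der0 ::
    "('v::euclidean_space \<Rightarrow> 'v \<Rightarrow> 'z::euclidean_space) \<Rightarrow> (('v \<times> 'z) \<Rightarrow>\<^sub>L ('v \<times> 'z)) set" where
  "Der0 B = {D \<in> Der B. \<forall>a. D (0, a) = 0}"

lemma DerD: "D \<in> Der B \<Longrightarrow> D (nil_bracket B x y) = nil_bracket B (D x) y + nil_bracket B x (D y)"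
  unfolding Der_def by blast

lemma bilinear_nil_bracket:
  assumes "bilinear B"
  shows "bilinear (nil_bracket B)"
proof -
  have l1: "linear (B u)" and l2: "linear (\<lambda>u. B u w)" for u w
    using assms unfolding bilinear_def by auto
  show ?thesis
    unfolding bilinear_def nil_bracket_def
    by (intro conjI allI linearI) (simp_all add: linear_add[OF l1] linear_scale[OF l1]
        linear_add[OF l2] linear_scale[OF l2])
qed

lemma bounded_bilinear_nil_bracket:
  fixes B :: "'v::euclidean_space \<Rightarrow> 'v \<Rightarrow> 'z::euclidean_space"
  shows "bilinear B \<Longrightarrow> bounded_bilinear (nil_bracket B)"
  using bilinear_nil_bracket bilinear_conv_bounded_bilinear by blast

lemma subspace_Der:
  fixes B :: "'v::euclidean_space \<Rightarrow> 'v \<Rightarrow> 'z::euclidean_space"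
  assumes "bilinear B"
  shows "subspace (Der B)"
proof -
  interpret nb: bounded_bilinear "nil_bracket B"
    by (rule bounded_bilinear_nil_bracket[OF assms])
  show ?thesis
    unfolding subspace_def Der_def
    by (auto simp: blinfun.bilinear_simps nb.bilinear_simps algebra_simps)
qed

lemma lie_alg_Aut_subset_Der:
  fixes B :: "'v::euclidean_space \<Rightarrow> 'v \<Rightarrow> 'z::euclidean_space"
  assumes "bilinear B"
  shows "lie_alg (Aut B) \<subseteq> Der B"
proof
  fix X
  assume "X \<in> lie_alg (Aut B)"
  then obtain \<gamma> where \<gamma>0: "\<gamma> 0 = id_blinfun" and \<gamma>_Aut: "\<And>t. \<gamma> t \<in> Aut B"
    and \<gamma>': "(\<gamma> has_vector_derivative X) (at 0)"
    unfolding lie_alg_def by blast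
  interpret nb: bounded_bilinear "nil_bracket B"
    by (rule bounded_bilinear_nil_bracket[OF assms])
  have "X (nil_bracket B x y) = nil_bracket B (X x) y + nil_bracket B x (X y)" for x y
  proof -
    have "\<gamma> t (nil_bracket B x y) = nil_bracket B (\<gamma> t x) (\<gamma> t y)" for t
      using \<gamma>_Aut[of t] unfolding Aut_def by blast
    then have hom: "(\<lambda>t. \<gamma> t (nil_bracket B x y)) = (\<lambda>t. nil_bracket B (\<gamma> t x) (\<gamma> t y))"
      by simp
    have "((\<lambda>t. \<gamma> t (nil_bracket B x y)) has_vector_derivative X (nil_bracket B x y)) (at 0)"
      by (rule has_vector_derivative_blinfun_apply[OF \<gamma>'])
    moreover have "((\<lambda>t. \<gamma> t (nil_bracket B x y)) has_vector_derivative
        nil_bracket B (\<gamma> 0 x) (X y) + nil_bracket B (X x) (\<gamma> 0 y)) (at 0)"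
      unfolding hom
      by (rule nb.has_vector_derivative[OF has_vector_derivative_blinfun_apply[OF \<gamma>']
            has_vector_derivative_blinfun_apply[OF \<gamma>']])
    ultimately have "X (nil_bracket B x y) =
        nil_bracket B (\<gamma> 0 x) (X y) + nil_bracket B (X x) (\<gamma> 0 y)"
      by (rule vector_derivative_unique_at)
    then show ?thesis using \<gamma>0 by (simp add: add.commute)
  qed
  then show "X \<in> Der B" unfolding Der_def by blast
qed

lemma lie_alg_Aut0_subset_Der0:
  fixes B :: "'v::euclidean_space \<Rightarrow> 'v \<Rightarrow> 'z::euclidean_space"
  assumes "bilinear B"
  shows "lie_alg (Aut0 B) \<subseteq> Der0 B"
proof
  fix X
  assume X: "X \<in> lie_alg (Aut0 B)"
  then obtain \<gamma> where \<gamma>_Aut0: "\<And>t. \<gamma> t \<in> Aut0 B" and \<gamma>': "(\<gamma> has_vector_derivative X) (at 0)"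
    unfolding lie_alg_def by blast
  have "X \<in> Der B"
    using X lie_alg_Aut_subset_Der[OF assms] unfolding lie_alg_def Aut0_def by blast
  moreover have "X (0, a) = 0" for a
  proof -
    have "(\<lambda>t. \<gamma> t (0, a)) = (\<lambda>t. (0, a))"
      using \<gamma>_Aut0 unfolding Aut0_def by auto
    then have "((\<lambda>t. (0, a)) has_vector_derivative X (0, a)) (at 0)"
      using has_vector_derivative_blinfun_apply[OF \<gamma>', of "(0, a)"] by simp
    then show ?thesis
      using vector_derivative_unique_at[OF _ has_vector_derivative_const] by blast
  qed
  ultimately show "X \<in> Der0 B" unfolding Der0_def by blast
qed

text \<open>The curve \<open>t \<mapsto> exp(-tD) [exp(tD) x, exp(tD) y]\<close> has derivative zero.\<close>

lemma exp_curve_in_Aut: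
  fixes B :: "'v::euclidean_space \<Rightarrow> 'v \<Rightarrow> 'z::euclidean_space"
  assumes "bilinear B" and D: "D \<in> Der B"
  shows "exp_curve D t \<in> Aut B"
proof -
  interpret nb: bounded_bilinear "nil_bracket B"
    by (rule bounded_bilinear_nil_bracket[OF assms(1)])
  have "exp_curve D t (nil_bracket B x y) = nil_bracket B (exp_curve D t x) (exp_curve D t y)" for x y
  proof -
    define w where "w s = nil_bracket B (exp_curve D s x) (exp_curve D s y)" for s
    have "(w has_vector_derivative nil_bracket B (exp_curve D s x) (D (exp_curve D s y)) +
        nil_bracket B (D (exp_curve D s x)) (exp_curve D s y)) (at s)" for s
      unfolding w_def[abs_def]
      by (rule nb.has_vector_derivative[OF exp_curve_apply_has_vector_derivative
            exp_curve_apply_has_vector_derivative])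
    then have w': "(w has_vector_derivative D (w s)) (at s)" for s
      by (simp add: w_def DerD[OF D] add.commute)
    have "((\<lambda>s. exp_curve (- D) s (w s)) has_vector_derivative 0) (at s)" for s
      using blinfun.has_vector_derivative[OF exp_curve_has_vector_derivative w', of "- D"]
      by (simp add: blinfun.bilinear_simps)
    from has_vector_derivative_zero_imp_eq[OF this]
    have "exp_curve D (- t) (w t) = nil_bracket B x y"
      by (simp add: w_def exp_curve_uminus)
    then show ?thesis
      using exp_curve_inverse[of D "- t" "w t"] by (simp add: w_def)
  qed
  then show ?thesis unfolding Aut_def using bij_exp_curve by blast
qed

lemma exp_curve_in_Aut0:
  fixes B :: "'v::euclidean_space \<Rightarrow> 'v \<Rightarrow> 'z::euclidean_space"
  assumes "bilinear B" and D: "D \<in> Der0 B"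
  shows "exp_curve D t \<in> Aut0 B"
proof -
  have "((\<lambda>s. exp_curve D s (0, a)) has_vector_derivative 0) (at s)" for a s
    using has_vector_derivative_blinfun_apply[OF exp_curve_has_vector_derivative[of D s], of "(0, a)"] D
    unfolding Der0_def by simp
  from has_vector_derivative_zero_imp_eq[OF this]
  have "exp_curve D t (0, a) = (0, a)" for a by simp
  then show ?thesis
    using exp_curve_in_Aut[OF assms(1)] D unfolding Der0_def Aut0_def by blast
qed

lemma lie_alg_Aut_eq_Der:
  fixes B :: "'v::euclidean_space \<Rightarrow> 'v \<Rightarrow> 'z::euclidean_space"
  assumes "bilinear B"
  shows "lie_alg (Aut B) = Der B"
proof
  show "Der B \<subseteq> lie_alg (Aut B)"
    unfolding lie_alg_def
    using exp_curve_in_Aut[OF assms] exp_curve_0 exp_curve_has_vector_derivative_0 by blast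
qed (rule lie_alg_Aut_subset_Der[OF assms])

lemma lie_alg_Aut0_eq_Der0:
  fixes B :: "'v::euclidean_space \<Rightarrow> 'v \<Rightarrow> 'z::euclidean_space"
  assumes "bilinear B"
  shows "lie_alg (Aut0 B) = Der0 B"
proof
  show "Der0 B \<subseteq> lie_alg (Aut0 B)"
    unfolding lie_alg_def
    using exp_curve_in_Aut0[OF assms] exp_curve_0 exp_curve_has_vector_derivative_0 by blast
qed (rule lie_alg_Aut0_subset_Der0[OF assms])

section \<open>Dimension counting for spaces of bounded linear maps\<close>

definition outer_blinfun :: "'b::euclidean_space \<Rightarrow> 'a::euclidean_space \<Rightarrow> 'a \<Rightarrow>\<^sub>L 'b" where
  "outer_blinfun i j = Blinfun (\<lambda>x. (x \<bullet> j) *\<^sub>R i)"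

lemma outer_blinfun_apply [simp]: "outer_blinfun i j x = (x \<bullet> j) *\<^sub>R i"
  unfolding outer_blinfun_def
  by (subst bounded_linear_Blinfun_apply) (auto intro!: bounded_linear_intros)

lemma blinfun_eq_sum_outer:
  fixes f :: "'a::euclidean_space \<Rightarrow>\<^sub>L 'b::euclidean_space"
  shows "f = (\<Sum>i\<in>Basis. \<Sum>j\<in>Basis. (f j \<bullet> i) *\<^sub>R outer_blinfun i j)"
proof (rule blinfun_eqI)
  fix x
  have "f x = blinfun_of_matrix (\<lambda>i j. f j \<bullet> i) x"
    by (simp add: blinfun_of_matrix_works)
  also have "\<dots> = (\<Sum>i\<in>Basis. \<Sum>j\<in>Basis. ((x \<bullet> j) * (f j \<bullet> i)) *\<^sub>R i)"
    by (rule blinfun_of_matrix_apply)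
  also have "\<dots> = (\<Sum>i\<in>Basis. \<Sum>j\<in>Basis. (f j \<bullet> i) *\<^sub>R outer_blinfun i j) x"
    by (simp add: blinfun.sum_left blinfun.scaleR_left mult.commute)
  finally show "f x = (\<Sum>i\<in>Basis. \<Sum>j\<in>Basis. (f j \<bullet> i) *\<^sub>R outer_blinfun i j) x" .
qed

lemma finite_independent_blinfun:
  fixes S :: "('a::euclidean_space \<Rightarrow>\<^sub>L 'b::euclidean_space) set"
  assumes "independent S"
  shows "finite S"
proof -
  have "f \<in> span ((\<lambda>(i, j). outer_blinfun i j) ` (Basis \<times> Basis))"
    for f :: "'a \<Rightarrow>\<^sub>L 'b"
    by (subst blinfun_eq_sum_outer) (intro span_sum span_mul span_base; force)
  then show ?thesis
    using independent_span_bound[of "(\<lambda>(i, j). outer_blinfun i j) ` (Basis \<times> Basis)" S] assms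
    by auto
qed

lemma dim_le_dim_kernel_add_dim_image:
  fixes f :: "'a::real_vector \<Rightarrow> 'b::real_vector"
  assumes finA: "\<And>T::'a set. independent T \<Longrightarrow> finite T"
    and finB: "\<And>T::'b set. independent T \<Longrightarrow> finite T"
    and S: "subspace S" and f: "linear f"
  shows "dim S \<le> dim {x\<in>S. f x = 0} + dim (f ` S)"
proof -
  define K where "K = {x\<in>S. f x = 0}"
  obtain BK where BK: "BK \<subseteq> K" "independent BK" "K \<subseteq> span BK" "card BK = dim K"
    using basis_exists by blast
  obtain BF where BF: "BF \<subseteq> f ` S" "independent BF" "f ` S \<subseteq> span BF" "card BF = dim (f ` S)"
    using basis_exists by blast
  have "\<forall>y\<in>BF. \<exists>x\<in>S. f x = y" using BF(1) by blast
  then obtain g where g: "\<And>y. y \<in> BF \<Longrightarrow> g y \<in> S \<and> f (g y) = y"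
    by metis
  define P where "P = g ` BF"
  have "S \<subseteq> span (BK \<union> P)"
  proof
    fix x
    assume x: "x \<in> S"
    have "f ` P = BF" unfolding P_def using g by (force simp: image_image)
    then have "f x \<in> f ` span P"
      using x BF(3) span_linear_image[OF f, of P] by blast
    then obtain p where p: "p \<in> span P" "f x = f p" by blast
    have "P \<subseteq> S" using g unfolding P_def by blast
    then have "p \<in> S" using p(1) S by (meson span_minimal subsetD)
    then have "x - p \<in> K" unfolding K_def using x S p(2) f
      by (simp add: subspace_diff linear_diff)
    then have "x - p \<in> span (BK \<union> P)" using BK(3) span_mono[of BK "BK \<union> P"] by blast
    moreover have "p \<in> span (BK \<union> P)" using p(1) span_mono[of P "BK \<union> P"] by blast
    ultimately show "x \<in> span (BK \<union> P)" using span_add by fastforce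
  qed
  then have "dim S \<le> card (BK \<union> P)"
    using finA[OF BK(2)] finB[OF BF(2)] P_def by (intro dim_le_card) auto
  also have "\<dots> \<le> card BK + card BF"
    using card_Un_le[of BK P] card_image_le[OF finB[OF BF(2)], of g] unfolding P_def by linarith
  finally show ?thesis using BK(4) BF(4) unfolding K_def by simp
qed

lemma dim_kernel_add_dim_image_le:
  fixes f :: "'a::real_vector \<Rightarrow> 'b::real_vector"
  assumes finA: "\<And>T::'a set. independent T \<Longrightarrow> finite T"
    and f: "linear f"
  shows "dim {x\<in>S. f x = 0} + dim (f ` S) \<le> dim S"
proof -
  define K where "K = {x\<in>S. f x = 0}"
  obtain BK where BK: "BK \<subseteq> K" "independent BK" "K \<subseteq> span BK" "card BK = dim K"
    using basis_exists by blast
  have "BK \<subseteq> S" using BK(1) unfolding K_def by blast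
  then obtain C where C: "BK \<subseteq> C" "C \<subseteq> S" "independent C" "S \<subseteq> span C"
    using maximal_independent_subset_extend[OF _ BK(2)] by blast
  have fin: "finite C" using finA C(3) by blast
  have "f c \<in> span (f ` (C - BK))" if "c \<in> C" for c
    using that BK(1) unfolding K_def by (cases "c \<in> BK") (auto simp: span_zero span_base)
  then have "span (f ` C) \<subseteq> span (f ` (C - BK))"
    by (intro span_minimal subspace_span) blast
  moreover have "f ` S \<subseteq> span (f ` C)"
    unfolding span_linear_image[OF f] using C(4) by (rule image_mono)
  ultimately have "f ` S \<subseteq> span (f ` (C - BK))" by (rule order.trans[rotated])
  then have "dim (f ` S) \<le> card (f ` (C - BK))"
    using fin by (intro dim_le_card) auto
  also have "\<dots> \<le> card (C - BK)"
    using fin by (intro card_image_le) auto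
  also have "\<dots> = card C - card BK"
    using fin C(1) by (intro card_Diff_subset) (auto intro: finite_subset)
  finally show ?thesis
    using basis_card_eq_dim[OF C(2) C(4) C(3)] BK(4) card_mono[OF fin C(1)] unfolding K_def
    by linarith
qed

lemma dim_eq_dim_kernel_add_dim_image:
  fixes f :: "'a::real_vector \<Rightarrow> 'b::real_vector"
  assumes finA: "\<And>T::'a set. independent T \<Longrightarrow> finite T"
    and finB: "\<And>T::'b set. independent T \<Longrightarrow> finite T"
    and S: "subspace S" and f: "linear f"
  shows "dim S = dim {x\<in>S. f x = 0} + dim (f ` S)"
proof -
  have "dim S \<le> dim {x\<in>S. f x = 0} + dim (f ` S)"
    by (rule dim_le_dim_kernel_add_dim_image[OF finA finB S f])
  moreover have "dim {x\<in>S. f x = 0} + dim (f ` S) \<le> dim S"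
    by (rule dim_kernel_add_dim_image_le[OF finA f])
  ultimately show ?thesis by linarith
qed

lemma card_le_dim_if_independent:
  fixes B V :: "'a::real_vector set"
  assumes fin: "\<And>T::'a set. independent T \<Longrightarrow> finite T"
    and "B \<subseteq> V" "independent B"
  shows "card B \<le> dim V"
proof -
  obtain C where C: "B \<subseteq> C" "C \<subseteq> V" "independent C" "V \<subseteq> span C"
    using maximal_independent_subset_extend[OF assms(2,3)] by blast
  show ?thesis
    using basis_card_eq_dim[OF C(2) C(4) C(3)] card_mono[OF fin[OF C(3)] C(1)] by simp
qed

lemma independent_image_biorthogonal:
  fixes v :: "'i \<Rightarrow> 'a::real_vector" and \<phi> :: "'i \<Rightarrow> 'a \<Rightarrow> real"
  assumes P: "finite P" and lin: "\<And>q. q \<in> P \<Longrightarrow> linear (\<phi> q)"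
    and dual: "\<And>p q. p \<in> P \<Longrightarrow> q \<in> P \<Longrightarrow> \<phi> q (v p) = (if p = q then 1 else 0)"
  shows "inj_on v P" and "independent (v ` P)"
proof -
  show inj: "inj_on v P"
    by (rule inj_onI) (metis dual one_neq_zero)
  show "independent (v ` P)"
  proof (rule independent_if_scalars_zero)
    fix c x
    assume sum: "(\<Sum>y\<in>v ` P. c y *\<^sub>R y) = 0" and "x \<in> v ` P"
    then obtain q where q: "q \<in> P" "x = v q" by blast
    have "0 = \<phi> q (\<Sum>p\<in>P. c (v p) *\<^sub>R v p)"
      using sum lin[OF q(1)] by (simp add: sum.reindex[OF inj] linear_0)
    also have "\<dots> = (\<Sum>p\<in>P. c (v p) * \<phi> q (v p))"
      using lin[OF q(1)] by (simp add: linear_sum linear_scale)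
    also have "\<dots> = (\<Sum>p\<in>P. if p = q then c (v p) else 0)"
      using dual[OF _ q(1)] by (intro sum.cong) auto
    also have "\<dots> = c x" using P q by simp
    finally show "c x = 0" by simp
  qed (use P in simp)
qed

section \<open>Skew-adjoint maps\<close>

definition skew_outer :: "'a::euclidean_space \<Rightarrow> 'a \<Rightarrow> 'a \<Rightarrow>\<^sub>L 'a" where
  "skew_outer i j = outer_blinfun i j - outer_blinfun j i"

lemma skew_outer_apply: "skew_outer i j x = (x \<bullet> j) *\<^sub>R i - (x \<bullet> i) *\<^sub>R j"
  unfolding skew_outer_def by (simp add: blinfun.diff_left)

lemma skew_blinfun_in_span_skew_outer:
  fixes K :: "'a::euclidean_space \<Rightarrow>\<^sub>L 'a"
  assumes skew: "\<And>x y. K x \<bullet> y = - (x \<bullet> K y)"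
  shows "K \<in> span {skew_outer i j | i j. i \<in> Basis \<and> j \<in> Basis}"
proof -
  define M where "M = (\<Sum>i\<in>Basis. \<Sum>j\<in>Basis. (K j \<bullet> i) *\<^sub>R outer_blinfun i j)"
  have "(K i \<bullet> j) *\<^sub>R outer_blinfun i j = - ((K j \<bullet> i) *\<^sub>R outer_blinfun i j)" for i j
    using skew[of i j] by (simp add: inner_commute)
  then have "(\<Sum>i\<in>Basis. \<Sum>j\<in>Basis. (K j \<bullet> i) *\<^sub>R outer_blinfun j i) = - M"
    unfolding M_def by (subst sum.swap) (simp add: sum_negf)
  then have "(\<Sum>i\<in>Basis. \<Sum>j\<in>Basis. (K j \<bullet> i) *\<^sub>R skew_outer i j) = 2 *\<^sub>R M"
    unfolding skew_outer_def M_def by (simp add: scaleR_diff_right sum_subtractf scaleR_2)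
  moreover have "M = K"
    unfolding M_def by (rule blinfun_eq_sum_outer[symmetric])
  ultimately have "K = (1/2) *\<^sub>R (\<Sum>i\<in>Basis. \<Sum>j\<in>Basis. (K j \<bullet> i) *\<^sub>R skew_outer i j)"
    by simp
  also have "\<dots> \<in> span {skew_outer i j | i j. i \<in> Basis \<and> j \<in> Basis}"
    by (intro span_mul span_sum span_base) blast
  finally show ?thesis .
qed

lemma finite_pairs_less: "finite {(k, l). k < l \<and> l < (m::nat)}"
  by (rule finite_subset[of _ "{..<m} \<times> {..<m}"]) auto

lemma card_pairs_less: "2 * card {(k, l). k < l \<and> l < (m::nat)} = m * (m - 1)"
proof (induction m)
  case (Suc m)
  have eq: "{(k, l). k < l \<and> l < Suc m} = {(k, l). k < l \<and> l < m} \<union> (\<lambda>k. (k, m)) ` {..<m}"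
    by auto
  have "card {(k, l). k < l \<and> l < Suc m} =
      card {(k, l). k < l \<and> l < m} + card ((\<lambda>k. (k, m)) ` {..<m})"
    unfolding eq by (rule card_Un_disjoint[OF finite_pairs_less]) auto
  also have "card ((\<lambda>k. (k, m)) ` {..<m}) = m"
    by (simp add: card_image inj_on_def)
  finally show ?case using Suc.IH by (cases m) (auto simp: algebra_simps)
qed simp

lemma dim_skew_blinfun_le:
  fixes S :: "('a::euclidean_space \<Rightarrow>\<^sub>L 'a) set"
  assumes skew: "\<And>K x y. K \<in> S \<Longrightarrow> K x \<bullet> y = - (x \<bullet> K y)"
  shows "2 * dim S \<le> DIM('a) * (DIM('a) - 1)"
proof -
  obtain e where e: "bij_betw e {..<DIM('a)} (Basis :: 'a set)"
    using ex_bij_betw_nat_finite[of "Basis :: 'a set"] atLeast0LessThan by auto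
  define P where "P = {(k, l). k < l \<and> l < DIM('a)}"
  define T where "T = (\<lambda>(k, l). skew_outer (e k) (e l)) ` P"
  have "skew_outer i j \<in> span T" if "i \<in> Basis" "j \<in> Basis" for i j
  proof -
    have "i \<in> e ` {..<DIM('a)}" "j \<in> e ` {..<DIM('a)}"
      using e that unfolding bij_betw_def by auto
    then obtain k l where kl: "k < DIM('a)" "l < DIM('a)" "i = e k" "j = e l"
      by auto
    consider "k < l" | "l < k" | "k = l" by arith
    then show ?thesis
    proof cases
      case 1
      then show ?thesis using kl unfolding T_def P_def by (intro span_base) force
    next
      case 2
      then have "- skew_outer j i \<in> span T"
        using kl unfolding T_def P_def by (intro span_neg span_base) force
      then show ?thesis by (simp add: skew_outer_def)
    next
      case 3
      then show ?thesis using kl by (simp add: skew_outer_def span_zero)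
    qed
  qed
  then have "span {skew_outer i j | i j. i \<in> Basis \<and> j \<in> Basis} \<subseteq> span T"
    by (intro span_minimal subspace_span) blast
  then have "S \<subseteq> span T"
    using skew_blinfun_in_span_skew_outer skew by blast
  then have "dim S \<le> card T"
    using finite_pairs_less unfolding T_def P_def by (intro dim_le_card) auto
  also have "card T \<le> card P"
    unfolding T_def using finite_pairs_less unfolding P_def by (rule card_image_le)
  finally show ?thesis using card_pairs_less[of "DIM('a)"] unfolding P_def by linarith
qed

lemma independent_skew_outer:
  fixes e :: "nat \<Rightarrow> 'a::euclidean_space"
  assumes e: "bij_betw e {..<DIM('a)} Basis"
  defines "P \<equiv> {(k, l). k < l \<and> l < DIM('a)}"
  shows "inj_on (\<lambda>(k, l). skew_outer (e k) (e l)) P"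
    and "independent ((\<lambda>(k, l). skew_outer (e k) (e l)) ` P)"
proof -
  have eB: "e a \<in> Basis" if "a < DIM('a)" for a
    using e that unfolding bij_betw_def by auto
  have ee: "e a \<bullet> e b = (if a = b then 1 else 0)" if "a < DIM('a)" "b < DIM('a)" for a b
    using inner_Basis[OF eB eB] inj_on_eq_iff[OF bij_betw_imp_inj_on[OF e]] that by auto
  define \<phi> where "\<phi> p K = K (e (snd p)) \<bullet> e (fst p)" for p and K :: "'a \<Rightarrow>\<^sub>L 'a"
  have "linear (\<phi> p)" for p
    unfolding \<phi>_def by (intro linearI) (simp_all add: blinfun.bilinear_simps inner_add_left)
  moreover have "\<phi> q ((\<lambda>(k, l). skew_outer (e k) (e l)) p) = (if p = q then 1 else 0)"
    if "p \<in> P" "q \<in> P" for p q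
    using that unfolding P_def \<phi>_def
    by (auto simp: skew_outer_apply inner_diff_left ee split: if_splits)
  ultimately show "inj_on (\<lambda>(k, l). skew_outer (e k) (e l)) P"
    and "independent ((\<lambda>(k, l). skew_outer (e k) (e l)) ` P)"
    using independent_image_biorthogonal[of P \<phi>] finite_pairs_less unfolding P_def by blast+
qed

section \<open>Fat algebras: derivations and their restriction to the centre\<close>

lemma fat_iff_inner:
  fixes B :: "'v::real_vector \<Rightarrow> 'v \<Rightarrow> 'z::euclidean_space"
  shows "fat B \<longleftrightarrow> (\<forall>l u. l \<noteq> 0 \<longrightarrow> (\<forall>w. l \<bullet> B u w = 0) \<longrightarrow> u = 0)"
proof
  assume fat: "fat B"
  show "\<forall>l u. l \<noteq> 0 \<longrightarrow> (\<forall>w. l \<bullet> B u w = 0) \<longrightarrow> u = 0"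
  proof (intro allI impI)
    fix l :: 'z and u
    assume "l \<noteq> 0" and "\<forall>w. l \<bullet> B u w = 0"
    moreover have "linear (\<lambda>x. l \<bullet> x)"
      by (rule bounded_linear.linear[OF bounded_linear_inner_right])
    ultimately show "u = 0" using fat unfolding fat_def by (metis inner_eq_zero_iff)
  qed
next
  assume inner: "\<forall>l u. l \<noteq> 0 \<longrightarrow> (\<forall>w. l \<bullet> B u w = 0) \<longrightarrow> u = 0"
  show "fat B" unfolding fat_def
  proof (intro allI impI)
    fix \<mu> :: "'z \<Rightarrow> real" and u
    assume "linear \<mu> \<and> (\<exists>a. \<mu> a \<noteq> 0)" and "\<forall>w. \<mu> (B u w) = 0"
    moreover have "\<mu> x = x \<bullet> adjoint \<mu> 1" if "linear \<mu>" for x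
      using adjoint_clauses(1)[OF that, of x 1] by simp
    ultimately show "u = 0"
      using inner[rule_format, of "adjoint \<mu> 1" u] by (metis inner_commute inner_zero_right)
  qed
qed

lemma span_brackets_eq_UNIV:
  fixes B :: "'v::euclidean_space \<Rightarrow> 'v \<Rightarrow> 'z::euclidean_space"
  assumes "fat B"
  shows "span {B u w | u w. True} = UNIV"
proof (rule ccontr)
  assume "span {B u w | u w. True} \<noteq> UNIV"
  then have "dim {B u w | u w. True} < DIM('z)"
    using dim_eq_full dim_subset_UNIV[of "{B u w | u w. True}"] by (metis le_neq_implies_less)
  then obtain l where l: "l \<noteq> 0" "\<And>y. y \<in> span {B u w | u w. True} \<Longrightarrow> orthogonal l y"
    using orthogonal_to_subspace_exists by blast
  have "\<forall>w. l \<bullet> B u w = 0" for u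
    using l(2) span_base[of _ "{B u w | u w. True}"] unfolding orthogonal_def by blast
  then have "u = 0" for u :: 'v
    using assms l(1) unfolding fat_iff_inner by blast
  moreover obtain b :: 'v where "b \<in> Basis" using nonempty_Basis by blast
  ultimately show False using nonzero_Basis by blast
qed

lemma Der_apply_bracket:
  assumes "D \<in> Der B"
  shows "D (0, B u w) = (0, B (fst (D (u, 0))) w + B u (fst (D (w, 0))))"
  using DerD[OF assms, of "(u, 0)" "(w, 0)"] by (simp add: nil_bracket_def)

lemma Der_maps_center:
  fixes B :: "'v::euclidean_space \<Rightarrow> 'v \<Rightarrow> 'z::euclidean_space"
  assumes "fat B" and D: "D \<in> Der B"
  shows "fst (D (0, q)) = 0"
proof -
  have "linear (\<lambda>q. fst (D (0::'v, q)))"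
    by (intro bounded_linear.linear bounded_linear_fst_comp
        bounded_linear_compose[OF blinfun.bounded_linear_right] bounded_linear_Pair
        bounded_linear_zero bounded_linear_ident)
  then have "subspace {q. fst (D (0::'v, q)) = 0}"
    by (rule linear_subspace_kernel)
  moreover have "{B u w | u w. True} \<subseteq> {q. fst (D (0::'v, q)) = 0}"
    using Der_apply_bracket[OF D] by auto
  ultimately show ?thesis
    using span_minimal span_brackets_eq_UNIV[OF assms(1)] by blast
qed

definition center_restrict ::
    "(('v::euclidean_space \<times> 'z::euclidean_space) \<Rightarrow>\<^sub>L ('v \<times> 'z)) \<Rightarrow> ('z \<Rightarrow>\<^sub>L 'z)" where
  "center_restrict D = Blinfun (\<lambda>q. snd (D (0, q)))"

lemma center_restrict_apply [simp]: "center_restrict D q = snd (D (0, q))"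
  unfolding center_restrict_def
  by (subst bounded_linear_Blinfun_apply)
     (auto intro!: bounded_linear_snd_comp bounded_linear_compose[OF blinfun.bounded_linear_right]
        bounded_linear_Pair bounded_linear_zero bounded_linear_ident)

lemma linear_center_restrict: "linear center_restrict"
  by (rule linearI) (auto intro!: blinfun_eqI simp: blinfun.bilinear_simps)

lemma center_restrict_Der:
  assumes "D \<in> Der B"
  shows "center_restrict D (B u w) = B (fst (D (u, 0))) w + B u (fst (D (w, 0)))"
  using Der_apply_bracket[OF assms] by simp

lemma linear_Der_v_part: "linear (\<lambda>u. fst (blinfun_apply D (u, 0)))"
  by (intro bounded_linear.linear bounded_linear_fst_comp
      bounded_linear_compose[OF blinfun.bounded_linear_right] bounded_linear_Pair
      bounded_linear_zero bounded_linear_ident)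

lemma Der0_eq_kernel_center_restrict:
  fixes B :: "'v::euclidean_space \<Rightarrow> 'v \<Rightarrow> 'z::euclidean_space"
  assumes "fat B"
  shows "Der0 B = {D \<in> Der B. center_restrict D = 0}"
proof -
  have "(\<forall>a. D (0, a) = 0) \<longleftrightarrow> center_restrict D = 0" if "D \<in> Der B" for D
  proof
    assume "center_restrict D = 0"
    then have "snd (D (0, a)) = 0" for a
      by (metis center_restrict_apply blinfun.zero_left)
    then show "\<forall>a. D (0, a) = 0"
      using Der_maps_center[OF assms that] by (simp add: prod_eq_iff)
  qed (auto intro: blinfun_eqI)
  then show ?thesis unfolding Der0_def by blast
qed

lemma dim_Aut_quot_eq_dim_center_restrict:
  fixes B :: "'v::euclidean_space \<Rightarrow> 'v \<Rightarrow> 'z::euclidean_space"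
  assumes "bilinear B" and "fat B"
  shows "dim_Aut_quot B = real (dim (center_restrict ` Der B))"
proof -
  have "dim (Der B) = dim {D \<in> Der B. center_restrict D = 0} + dim (center_restrict ` Der B)"
    by (rule dim_eq_dim_kernel_add_dim_image[OF finite_independent_blinfun finite_independent_blinfun
          subspace_Der[OF assms(1)] linear_center_restrict])
  then show ?thesis
    unfolding dim_Aut_quot_def lie_alg_Aut_eq_Der[OF assms(1)] lie_alg_Aut0_eq_Der0[OF assms(1)]
      Der0_eq_kernel_center_restrict[OF assms(2)]
    by simp
qed

section \<open>Symmetric restrictions of derivations are scalar\<close>

lemma vector_eq_rdotI: "(\<And>w. x \<bullet> w = y \<bullet> w) \<Longrightarrow> x = y"
  using vector_eq_rdot by blast

definition lin_trace :: "('a::euclidean_space \<Rightarrow> 'a) \<Rightarrow> real" where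
  "lin_trace f = (\<Sum>b\<in>Basis. f b \<bullet> b)"

lemma lin_trace_add: "lin_trace (\<lambda>x. f x + g x) = lin_trace f + lin_trace g"
  unfolding lin_trace_def by (simp add: inner_add_left sum.distrib)

lemma lin_trace_scaleR_id: "lin_trace (\<lambda>x. c *\<^sub>R (x::'a::euclidean_space)) = c * DIM('a)"
  unfolding lin_trace_def by simp

lemma lin_trace_adjoint:
  assumes "linear f"
  shows "lin_trace (adjoint f) = lin_trace f"
  unfolding lin_trace_def using adjoint_clauses(2)[OF assms] by (simp add: inner_commute)

lemma lin_trace_comp_commute:
  fixes f g :: "'a::euclidean_space \<Rightarrow> 'a"
  assumes "linear f" "linear g"
  shows "lin_trace (f \<circ> g) = lin_trace (g \<circ> f)"
proof -
  have expand: "h (k b) = (\<Sum>c\<in>Basis. (k b \<bullet> c) *\<^sub>R h c)" if "linear h" for h k :: "'a \<Rightarrow> 'a" and b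
    using linear_sum[OF that] linear_scale[OF that]
    by (metis (no_types, lifting) euclidean_representation sum.cong)
  have "lin_trace (f \<circ> g) = (\<Sum>b\<in>Basis. \<Sum>c\<in>Basis. (g b \<bullet> c) * (f c \<bullet> b))"
    unfolding lin_trace_def by (simp add: expand[OF assms(1)] inner_sum_left)
  also have "\<dots> = (\<Sum>c\<in>Basis. \<Sum>b\<in>Basis. (f c \<bullet> b) * (g b \<bullet> c))"
    by (subst sum.swap) (simp add: mult.commute)
  also have "\<dots> = lin_trace (g \<circ> f)"
    unfolding lin_trace_def by (simp add: expand[OF assms(2)] inner_sum_left)
  finally show ?thesis .
qed

lemma bilinear_form_inner_representation:
  fixes \<beta> :: "'a::euclidean_space \<Rightarrow> 'a \<Rightarrow> real"
  assumes "bilinear \<beta>"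
  obtains W where "linear W" and "\<And>u w. W u \<bullet> w = \<beta> u w"
proof -
  define W where "W u = (\<Sum>b\<in>Basis. \<beta> u b *\<^sub>R b)" for u
  have l1: "linear (\<beta> u)" and l2: "linear (\<lambda>u. \<beta> u w)" for u w
    using assms unfolding bilinear_def by auto
  have W: "W u \<bullet> w = \<beta> u w" for u w
  proof -
    have "\<beta> u w = \<beta> u (\<Sum>b\<in>Basis. (w \<bullet> b) *\<^sub>R b)" by (simp add: euclidean_representation)
    also have "\<dots> = W u \<bullet> w"
      unfolding W_def by (simp add: linear_sum[OF l1] linear_scale[OF l1] inner_sum_left
          inner_commute[of w] mult.commute)
    finally show ?thesis by simp
  qed
  moreover have "linear W"
    by (rule linearI; rule vector_eq_rdotI)
      (simp_all add: W inner_add_left linear_add[OF l2] linear_scale[OF l2])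
  ultimately show ?thesis using that by blast
qed

text \<open>Pairing the derivation identity with an eigenvector \<open>l\<close> of \<open>A\<close> gives
  \<open>\<nu> \<omega>(u,w) = \<omega>(a u,w) + \<omega>(u,a w)\<close> for the form \<open>\<omega>(u,w) = \<langle>l, B u w\<rangle>\<close>, i.e.
  \<open>\<nu> I = a + W\<inverse> a\<^sup>T W\<close> where \<open>W\<close> represents \<open>\<omega>\<close>; \<open>W\<close> is invertible by fatness.\<close>

lemma derivation_eigenvalue_eq_trace:
  fixes B :: "'v::euclidean_space \<Rightarrow> 'v \<Rightarrow> 'z::euclidean_space"
    and A :: "'z \<Rightarrow> 'z" and a :: "'v \<Rightarrow> 'v"
  assumes B: "bilinear B" and fat: "fat B" and a: "linear a"
    and der: "\<And>u w. A (B u w) = B (a u) w + B u (a w)"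
    and sym: "\<And>x y. A x \<bullet> y = x \<bullet> A y"
    and l: "l \<noteq> 0" and eig: "A l = \<nu> *\<^sub>R l"
  shows "\<nu> * DIM('v) = 2 * lin_trace a"
proof -
  have "bilinear (\<lambda>u w. l \<bullet> B u w)"
    using B unfolding bilinear_def
    by (auto intro!: linear_compose[unfolded o_def,
          OF _ bounded_linear.linear[OF bounded_linear_inner_right]])
  then obtain W where W: "linear W" and W_inner: "\<And>u w. W u \<bullet> w = l \<bullet> B u w"
    by (rule bilinear_form_inner_representation) blast
  have "inj W"
    unfolding linear_inj_iff_eq_0[OF W]
    using fat l W_inner unfolding fat_iff_inner by (metis inner_zero_left)
  then obtain g where g: "linear g" and gW: "\<And>u. g (W u) = u" and Wg: "\<And>x. W (g x) = x"
    using linear_injective_isomorphism[OF W] by auto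
  have key: "\<nu> *\<^sub>R W u = W (a u) + adjoint a (W u)" for u
  proof (rule vector_eq_rdotI)
    fix w
    have "\<nu> *\<^sub>R W u \<bullet> w = A l \<bullet> B u w" by (simp add: eig W_inner)
    also have "\<dots> = l \<bullet> (B (a u) w + B u (a w))" by (simp add: sym der)
    also have "\<dots> = (W (a u) + adjoint a (W u)) \<bullet> w"
      by (simp add: inner_add_left inner_add_right W_inner adjoint_clauses(2)[OF a])
    finally show "\<nu> *\<^sub>R W u \<bullet> w = (W (a u) + adjoint a (W u)) \<bullet> w" .
  qed
  have "\<nu> *\<^sub>R u = a u + (g \<circ> (adjoint a \<circ> W)) u" for u
    using arg_cong[of _ _ g, OF key[of u]] by (simp add: linear_add[OF g] linear_scale[OF g] gW)
  then have "(\<lambda>u. \<nu> *\<^sub>R u) = (\<lambda>u. a u + (g \<circ> (adjoint a \<circ> W)) u)" by simp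
  then have "\<nu> * DIM('v) = lin_trace a + lin_trace (g \<circ> (adjoint a \<circ> W))"
    by (metis lin_trace_add lin_trace_scaleR_id)
  also have "lin_trace (g \<circ> (adjoint a \<circ> W)) = lin_trace ((adjoint a \<circ> W) \<circ> g)"
    by (rule lin_trace_comp_commute[OF g linear_compose[OF W adjoint_linear[OF a]]])
  also have "(adjoint a \<circ> W) \<circ> g = adjoint a" by (simp add: fun_eq_iff Wg)
  finally show ?thesis using lin_trace_adjoint[OF a] by simp
qed

lemma linear_coeff_eq_0_if_quadratic_nonneg:
  fixes c d :: real
  assumes "d \<ge> 0" and "\<And>t. 2 * t * c + t\<^sup>2 * d \<ge> 0"
  shows "c = 0"
proof (cases "d = 0")
  case True
  then show ?thesis using assms(2)[of "-1"] assms(2)[of 1] by simp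
next
  case False
  then have "d > 0" using assms(1) by simp
  moreover have "2 * (-c/d) * c + (-c/d)\<^sup>2 * d = - (c\<^sup>2 / d)"
    using \<open>d > 0\<close> by (simp add: power2_eq_square field_simps)
  ultimately show ?thesis
    using assms(2)[of "-c/d"] by (smt (verit) divide_pos_pos zero_less_power2)
qed

lemma self_adjoint_Rayleigh_max_attained:
  fixes A :: "'a::euclidean_space \<Rightarrow> 'a"
  assumes "linear A"
  obtains x where "x \<bullet> x = 1" and "\<And>y. y \<bullet> A y \<le> (x \<bullet> A x) * (y \<bullet> y)"
proof -
  obtain b :: 'a where "b \<in> Basis" using nonempty_Basis by blast
  then have ne: "sphere (0::'a) 1 \<noteq> {}" by (auto intro!: exI[of _ b])
  have "continuous_on (sphere 0 1) (\<lambda>x. x \<bullet> A x)"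
    using assms by (intro continuous_intros linear_continuous_on linear_conv_bounded_linear[THEN iffD1])
  then obtain x where x: "x \<in> sphere 0 1" and max: "\<And>y. y \<in> sphere 0 1 \<Longrightarrow> y \<bullet> A y \<le> x \<bullet> A x"
    using continuous_attains_sup[OF compact_sphere ne] by blast
  have "y \<bullet> A y \<le> (x \<bullet> A x) * (y \<bullet> y)" for y
  proof (cases "y = 0")
    case True
    then show ?thesis using linear_0[OF assms] by simp
  next
    case False
    then have "(y /\<^sub>R norm y) \<bullet> A (y /\<^sub>R norm y) \<le> x \<bullet> A x"
      by (intro max) simp
    then have "(y \<bullet> A y) / (norm y)\<^sup>2 \<le> x \<bullet> A x"
      by (simp add: linear_scale[OF assms] power2_eq_square divide_inverse ac_simps)
    then show ?thesis
      using False by (simp add: field_simps power2_norm_eq_inner)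
  qed
  moreover have "x \<bullet> x = 1" using x by (simp add: norm_eq_1)
  ultimately show ?thesis using that by blast
qed

text \<open>A maximiser of the Rayleigh quotient is an eigenvector: the quotient cannot increase to
  first order in the direction \<open>z = \<mu> x - A x\<close>, which forces \<open>z = 0\<close>.\<close>

lemma self_adjoint_Rayleigh_max_eigenvector:
  fixes A :: "'a::euclidean_space \<Rightarrow> 'a"
  assumes A: "linear A" and sym: "\<And>x y. A x \<bullet> y = x \<bullet> A y"
    and x: "x \<bullet> x = 1" and max: "\<And>y. y \<bullet> A y \<le> (x \<bullet> A x) * (y \<bullet> y)"
  shows "A x = (x \<bullet> A x) *\<^sub>R x"
proof -
  define \<mu> where "\<mu> = x \<bullet> A x"
  define z where "z = \<mu> *\<^sub>R x - A x"
  have zz: "z \<bullet> z = \<mu> * (x \<bullet> z) - z \<bullet> A x"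
    unfolding z_def by (simp add: inner_diff_left inner_commute)
  have "2 * t * (z \<bullet> z) + t\<^sup>2 * (\<mu> * (z \<bullet> z) - z \<bullet> A z) \<ge> 0" for t
  proof -
    have "A (x + t *\<^sub>R z) = A x + t *\<^sub>R A z"
      by (simp add: linear_add[OF A] linear_scale[OF A])
    then have P: "(x + t *\<^sub>R z) \<bullet> A (x + t *\<^sub>R z) = \<mu> + 2 * t * (z \<bullet> A x) + t\<^sup>2 * (z \<bullet> A z)"
      using sym[of z x] by (simp add: inner_add_left inner_add_right \<mu>_def power2_eq_square
          algebra_simps inner_commute)
    have Q: "(x + t *\<^sub>R z) \<bullet> (x + t *\<^sub>R z) = 1 + 2 * t * (x \<bullet> z) + t\<^sup>2 * (z \<bullet> z)"
      using x by (simp add: inner_add_left inner_add_right inner_commute power2_eq_square algebra_simps)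
    have "2 * t * (z \<bullet> z) + t\<^sup>2 * (\<mu> * (z \<bullet> z) - z \<bullet> A z) =
        \<mu> * ((x + t *\<^sub>R z) \<bullet> (x + t *\<^sub>R z)) - (x + t *\<^sub>R z) \<bullet> A (x + t *\<^sub>R z)"
      unfolding P Q zz by (simp add: algebra_simps power2_eq_square)
    then show ?thesis using max[of "x + t *\<^sub>R z"] unfolding \<mu>_def by simp
  qed
  moreover have "\<mu> * (z \<bullet> z) - z \<bullet> A z \<ge> 0"
    using max[of z] unfolding \<mu>_def by simp
  ultimately have "z \<bullet> z = 0"
    using linear_coeff_eq_0_if_quadratic_nonneg by blast
  then show ?thesis unfolding z_def \<mu>_def by simp
qed

lemma self_adjoint_eq_scaleR_if_unique_eigenvalue:
  fixes A :: "'a::euclidean_space \<Rightarrow> 'a"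
  assumes A: "linear A" and sym: "\<And>x y. A x \<bullet> y = x \<bullet> A y"
    and eig: "\<And>l \<nu>. l \<noteq> 0 \<Longrightarrow> A l = \<nu> *\<^sub>R l \<Longrightarrow> \<nu> = c"
  shows "A x = c *\<^sub>R x"
proof -
  have A': "linear (\<lambda>x. - A x)" using A by (simp add: linear_compose_neg)
  have sym': "(- A x) \<bullet> y = x \<bullet> (- A y)" for x y using sym by simp
  obtain x1 where x1: "x1 \<bullet> x1 = 1" "\<And>y. y \<bullet> A y \<le> (x1 \<bullet> A x1) * (y \<bullet> y)"
    using self_adjoint_Rayleigh_max_attained[OF A] by blast
  obtain x2 where x2: "x2 \<bullet> x2 = 1" "\<And>y. y \<bullet> - A y \<le> (x2 \<bullet> - A x2) * (y \<bullet> y)"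
    using self_adjoint_Rayleigh_max_attained[OF A'] by blast
  have "x1 \<noteq> 0" "x2 \<noteq> 0" using x1(1) x2(1) by auto
  have "x1 \<bullet> A x1 = c"
    by (rule eig[OF \<open>x1 \<noteq> 0\<close> self_adjoint_Rayleigh_max_eigenvector[OF A sym x1]])
  moreover have "- A x2 = (x2 \<bullet> - A x2) *\<^sub>R x2"
    by (rule self_adjoint_Rayleigh_max_eigenvector[OF A' sym' x2])
  then have "A x2 = (x2 \<bullet> A x2) *\<^sub>R x2"
    by (metis inner_minus_right minus_minus scaleR_minus_left)
  then have "x2 \<bullet> A x2 = c" by (rule eig[OF \<open>x2 \<noteq> 0\<close>])
  ultimately have q: "y \<bullet> A y = c * (y \<bullet> y)" for y
    using x1(2)[of y] x2(2)[of y] by simp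
  define S where "S y = A y - c *\<^sub>R y" for y
  have S: "linear S"
    unfolding S_def by (rule linearI) (simp_all add: linear_add[OF A] linear_scale[OF A] algebra_simps)
  have qS: "y \<bullet> S y = 0" for y unfolding S_def using q by (simp add: inner_diff_right)
  have symS: "S x \<bullet> y = x \<bullet> S y" for x y
    unfolding S_def using sym by (simp add: inner_diff_left inner_diff_right inner_commute)
  have "(x + S x) \<bullet> S (x + S x) = 0" by (rule qS)
  then have "S x \<bullet> S x = 0"
    using qS[of x] qS[of "S x"] symS[of x "S x"]
    by (simp add: linear_add[OF S] inner_add_left inner_add_right)
  then show ?thesis unfolding S_def by simp
qed

lemma symmetric_derivation_scalar:
  fixes B :: "'v::euclidean_space \<Rightarrow> 'v \<Rightarrow> 'z::euclidean_space"
    and A :: "'z \<Rightarrow> 'z" and a :: "'v \<Rightarrow> 'v"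
  assumes "bilinear B" "fat B" "linear A" "linear a"
    and der: "\<And>u w. A (B u w) = B (a u) w + B u (a w)"
    and sym: "\<And>x y. A x \<bullet> y = x \<bullet> A y"
  shows "A x = (2 * lin_trace a / DIM('v)) *\<^sub>R x"
proof (rule self_adjoint_eq_scaleR_if_unique_eigenvalue[OF assms(3) sym,
      where c="2 * lin_trace a / DIM('v)"])
  fix l \<nu>
  assume "l \<noteq> 0" and "A l = \<nu> *\<^sub>R l"
  then have "\<nu> * DIM('v) = 2 * lin_trace a"
    by (rule derivation_eigenvalue_eq_trace[where B=B and A=A and a=a, OF assms(1,2,4) der sym])
  then show "\<nu> = 2 * lin_trace a / DIM('v)" by (simp add: field_simps)
qed

section \<open>The upper bound\<close>

definition adjoint_blinfun :: "('a::euclidean_space \<Rightarrow>\<^sub>L 'a) \<Rightarrow> ('a \<Rightarrow>\<^sub>L 'a)" where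
  "adjoint_blinfun A = Blinfun (adjoint (blinfun_apply A))"

lemma adjoint_blinfun_inner: "adjoint_blinfun A x \<bullet> y = x \<bullet> A y"
proof -
  have A: "linear (blinfun_apply A)" by (rule bounded_linear.linear[OF blinfun.bounded_linear_right])
  then have "bounded_linear (adjoint (blinfun_apply A))"
    using adjoint_linear linear_conv_bounded_linear by blast
  then show ?thesis
    unfolding adjoint_blinfun_def using adjoint_clauses(2)[OF A]
    by (simp add: bounded_linear_Blinfun_apply)
qed

lemma inner_adjoint_blinfun: "x \<bullet> adjoint_blinfun A y = A x \<bullet> y"
  using adjoint_blinfun_inner[of A y x] by (simp add: inner_commute)

lemma linear_adjoint_blinfun: "linear (adjoint_blinfun :: ('a::euclidean_space \<Rightarrow>\<^sub>L 'a) \<Rightarrow> _)"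
  by (rule linearI; rule blinfun_eqI; rule vector_eq_rdotI)
    (simp_all add: adjoint_blinfun_inner blinfun.bilinear_simps inner_add_left inner_add_right)

lemma symmetric_center_restrict_in_span_id:
  fixes B :: "'v::euclidean_space \<Rightarrow> 'v \<Rightarrow> 'z::euclidean_space"
  assumes B: "bilinear B" and fat: "fat B" and D: "D \<in> Der B"
    and sym: "\<And>x y. center_restrict D x \<bullet> y = x \<bullet> center_restrict D y"
  shows "center_restrict D \<in> span {id_blinfun}"
proof -
  define c where "c = 2 * lin_trace (\<lambda>u. fst (D (u, 0))) / DIM('v)"
  have "center_restrict D x = c *\<^sub>R x" for x
    unfolding c_def
    by (rule symmetric_derivation_scalar[OF B fat _ linear_Der_v_part center_restrict_Der[OF D] sym])
      (rule bounded_linear.linear[OF blinfun.bounded_linear_right])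
  then have "center_restrict D = c *\<^sub>R id_blinfun"
    by (intro blinfun_eqI) (simp add: blinfun.scaleR_left)
  then show ?thesis by (simp add: span_mul span_base)
qed

lemma dim_center_restrict_Der_le:
  fixes B :: "'v::euclidean_space \<Rightarrow> 'v \<Rightarrow> 'z::euclidean_space"
  assumes B: "bilinear B" and fat: "fat B"
  shows "2 * dim (center_restrict ` Der B) \<le> 2 + DIM('z) * (DIM('z) - 1)"
proof -
  define W where "W = center_restrict ` Der B"
  define \<Phi> where "\<Phi> A = A - adjoint_blinfun A" for A :: "'z \<Rightarrow>\<^sub>L 'z"
  have W: "subspace W"
    unfolding W_def by (rule linear_subspace_image[OF linear_center_restrict subspace_Der[OF B]])
  have \<Phi>: "linear \<Phi>"
    unfolding \<Phi>_def[abs_def] by (intro linear_compose_sub linear_ident linear_adjoint_blinfun)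
  have rank_nullity: "dim W = dim {A\<in>W. \<Phi> A = 0} + dim (\<Phi> ` W)"
    by (rule dim_eq_dim_kernel_add_dim_image[OF finite_independent_blinfun finite_independent_blinfun W \<Phi>])
  have "{A\<in>W. \<Phi> A = 0} \<subseteq> span {id_blinfun}"
  proof
    fix A
    assume "A \<in> {A\<in>W. \<Phi> A = 0}"
    then obtain D where "D \<in> Der B" "A = center_restrict D" and "\<Phi> A = 0"
      unfolding W_def by blast
    moreover from \<open>\<Phi> A = 0\<close> have "A x \<bullet> y = x \<bullet> A y" for x y
      using adjoint_blinfun_inner[of A x y] unfolding \<Phi>_def by simp
    ultimately show "A \<in> span {id_blinfun}"
      using symmetric_center_restrict_in_span_id[OF B fat] by blast
  qed
  then have "dim {A\<in>W. \<Phi> A = 0} \<le> 1"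
    using dim_le_card[of _ "{id_blinfun}"] by simp
  moreover have "2 * dim (\<Phi> ` W) \<le> DIM('z) * (DIM('z) - 1)"
  proof (rule dim_skew_blinfun_le)
    fix K x y
    assume "K \<in> \<Phi> ` W"
    then show "K x \<bullet> y = - (x \<bullet> K y)"
      unfolding \<Phi>_def
      by (auto simp: blinfun.bilinear_simps inner_diff_left inner_diff_right adjoint_blinfun_inner
          inner_adjoint_blinfun)
  qed
  ultimately show ?thesis using rank_nullity unfolding W_def by linarith
qed

lemma real_DIM_mult_DIM_minus_1:
  "real (DIM('a::euclidean_space) * (DIM('a) - 1)) = real DIM('a) * (real DIM('a) - 1)"
  using DIM_positive[where 'a='a] by (simp add: of_nat_diff)

lemma dim_Aut_quot_le:
  fixes B :: "'v::euclidean_space \<Rightarrow> 'v \<Rightarrow> 'z::euclidean_space"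
  assumes "bilinear B" and "fat B"
  shows "dim_Aut_quot B \<le> 1 + real DIM('z) * (real DIM('z) - 1) / 2"
proof -
  have "real (2 * dim (center_restrict ` Der B)) \<le> real (2 + DIM('z) * (DIM('z) - 1))"
    using dim_center_restrict_Der_le[OF assms] by (rule of_nat_mono)
  then show ?thesis
    unfolding dim_Aut_quot_eq_dim_center_restrict[OF assms]
    using real_DIM_mult_DIM_minus_1[where 'a='z] by simp
qed

section \<open>Algebras of Heisenberg type\<close>

lemma bilinear_expand:
  fixes g :: "'a::real_vector \<Rightarrow> 'b::real_vector \<Rightarrow> 'c::real_vector"
  assumes "bilinear g"
  shows "g (x + x') y = g x y + g x' y" "g (c *\<^sub>R x) y = c *\<^sub>R g x y"
    "g (x - x') y = g x y - g x' y" "g 0 y = 0" "g (- x) y = - g x y"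
    "g x (y + y') = g x y + g x y'" "g x (c *\<^sub>R y) = c *\<^sub>R g x y"
    "g x (y - y') = g x y - g x y'" "g x 0 = 0" "g x (- y) = - g x y"
proof -
  have l: "linear (\<lambda>x. g x y)" "linear (g x)" for x y
    using assms unfolding bilinear_def by auto
  show "g (x + x') y = g x y + g x' y" "g (c *\<^sub>R x) y = c *\<^sub>R g x y"
    "g (x - x') y = g x y - g x' y" "g 0 y = 0" "g (- x) y = - g x y"
    using linear_add[OF l(1)] linear_scale[OF l(1)] linear_diff[OF l(1)] linear_0[OF l(1)]
      linear_neg[OF l(1)] by auto
  show "g x (y + y') = g x y + g x y'" "g x (c *\<^sub>R y) = c *\<^sub>R g x y"
    "g x (y - y') = g x y - g x y'" "g x 0 = 0" "g x (- y) = - g x y"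
    using linear_add[OF l(2)] linear_scale[OF l(2)] linear_diff[OF l(2)] linear_0[OF l(2)]
      linear_neg[OF l(2)] by auto
qed

definition dilation :: "('v::euclidean_space \<times> 'z::euclidean_space) \<Rightarrow>\<^sub>L ('v \<times> 'z)" where
  "dilation = Blinfun (\<lambda>p::'v \<times> 'z. (fst p, 2 *\<^sub>R snd p))"

lemma dilation_apply:
  fixes p :: "'v::euclidean_space \<times> 'z::euclidean_space"
  shows "dilation p = (fst p, 2 *\<^sub>R snd p)"
proof -
  have "bounded_linear (\<lambda>p::'v \<times> 'z. (fst p, 2 *\<^sub>R snd p))"
    by (intro bounded_linear_Pair bounded_linear_fst
        bounded_linear_compose[OF bounded_linear_scaleR_right bounded_linear_snd])
  then show ?thesis unfolding dilation_def by (simp add: bounded_linear_Blinfun_apply)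
qed

lemma dilation_in_Der: "dilation \<in> Der B"
  unfolding Der_def nil_bracket_def by (auto simp: dilation_apply scaleR_2)

locale heisenberg_structure =
  fixes H :: "'v::euclidean_space \<Rightarrow> 'v \<Rightarrow> 'z::euclidean_space"
    and gv :: "'v \<Rightarrow> 'v \<Rightarrow> real" and gz :: "'z \<Rightarrow> 'z \<Rightarrow> real" and J :: "'z \<Rightarrow> 'v \<Rightarrow> 'v"
  assumes skew_bilinear_H: "skew_bilinear H"
    and inner_product_gv: "inner_product_form gv"
    and inner_product_gz: "inner_product_form gz"
    and linear_J: "\<And>z. linear (J z)"
    and gv_J: "\<And>z u w. gv (J z u) w = gz z (H u w)"
    and J_J: "\<And>z u. J z (J z u) = - gz z z *\<^sub>R u"

lemma heisenberg_type_imp_structure: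
  fixes H :: "'v::euclidean_space \<Rightarrow> 'v \<Rightarrow> 'z::euclidean_space"
  assumes "heisenberg_type H"
  obtains gv gz J where "heisenberg_structure H gv gz J"
proof -
  obtain gv gz where H: "skew_bilinear H" and gv: "inner_product_form gv"
    and gz: "inner_product_form gz"
    and ex: "\<And>z. \<exists>T. linear T \<and> (\<forall>u w. gv (T u) w = gz z (H u w)) \<and> (\<forall>u. T (T u) = - gz z z *\<^sub>R u)"
    using assms unfolding heisenberg_type_def by blast
  then obtain J where "\<And>z. linear (J z) \<and> (\<forall>u w. gv (J z u) w = gz z (H u w)) \<and>
      (\<forall>u. J z (J z u) = - gz z z *\<^sub>R u)"
    by metis
  then have "heisenberg_structure H gv gz J"
    using H gv gz by (intro heisenberg_structure.intro) blast+
  then show ?thesis by (rule that)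
qed

context heisenberg_structure
begin

lemma bilinear_H: "bilinear H"
  using skew_bilinear_H unfolding skew_bilinear_def by blast

lemma bilinear_gv: "bilinear gv" and bilinear_gz: "bilinear gz"
  using inner_product_gv inner_product_gz unfolding inner_product_form_def by blast+

lemma gv_commute: "gv x y = gv y x"
  using inner_product_gv unfolding inner_product_form_def by blast

lemma gz_commute: "gz x y = gz y x"
  using inner_product_gz unfolding inner_product_form_def by blast

lemma gv_pos: "x \<noteq> 0 \<Longrightarrow> gv x x > 0"
  using inner_product_gv unfolding inner_product_form_def by blast

lemma gz_pos: "x \<noteq> 0 \<Longrightarrow> gz x x > 0"
  using inner_product_gz unfolding inner_product_form_def by blast

lemmas gv_simps = bilinear_expand[OF bilinear_gv, simplified]
lemmas gz_simps = bilinear_expand[OF bilinear_gz, simplified]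
lemmas H_simps = bilinear_expand[OF bilinear_H]
lemmas J_simps = linear_add[OF linear_J] linear_scale[OF linear_J] linear_diff[OF linear_J]
  linear_0[OF linear_J] linear_neg[OF linear_J]

lemma H_skew: "H u w = - H w u"
proof -
  have "H (u + w) (u + w) = 0" "H u u = 0" "H w w = 0"
    using skew_bilinear_H unfolding skew_bilinear_def by blast+
  then show ?thesis by (simp add: H_simps add_eq_0_iff)
qed

lemma gv_eqI:
  assumes "\<And>w. gv p w = gv q w"
  shows "p = q"
proof -
  have "gv (p - q) (p - q) = 0" using assms by (simp add: gv_simps)
  then show ?thesis using gv_pos[of "p - q"] by fastforce
qed

lemma gz_eqI:
  assumes "\<And>w. gz w p = gz w q"
  shows "p = q"
proof -
  have "gz (p - q) (p - q) = 0" using assms by (simp add: gz_simps)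
  then show ?thesis using gz_pos[of "p - q"] by fastforce
qed

lemma J_add: "J (x + y) u = J x u + J y u"
  by (rule gv_eqI) (simp add: gv_J gv_simps gz_simps)

lemma J_skew: "gv p (J z w) = - gv (J z p) w"
  by (simp add: gv_commute[of p] gv_J H_skew[of w p] gz_simps)

lemma J_anticommute: "J x (J y u) + J y (J x u) = - (2 * gz x y) *\<^sub>R u"
proof -
  have "J (x + y) (J (x + y) u) = - gz (x + y) (x + y) *\<^sub>R u" by (rule J_J)
  moreover have "J (x + y) (J (x + y) u) = J x (J x u) + J x (J y u) + J y (J x u) + J y (J y u)"
    by (simp add: J_add J_simps)
  moreover have "gz (x + y) (x + y) = gz x x + 2 * gz x y + gz y y"
    by (simp add: gz_simps gz_commute[of y x])
  ultimately show ?thesis by (simp add: J_J algebra_simps)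
qed

lemma J_J_J:
  "J z (J x (J y u)) = J x (J y (J z u)) + (2 * gz z y) *\<^sub>R J x u - (2 * gz z x) *\<^sub>R J y u"
proof -
  have swap: "J z (J x v) = - J x (J z v) - (2 * gz z x) *\<^sub>R v" for x v
  proof -
    have "J z (J x v) = (J z (J x v) + J x (J z v)) - J x (J z v)" by simp
    also have "\<dots> = - (2 * gz z x) *\<^sub>R v - J x (J z v)" by (simp only: J_anticommute)
    finally show ?thesis by simp
  qed
  have "J z (J x (J y u)) = - J x (- J y (J z u) - (2 * gz z y) *\<^sub>R u) - (2 * gz z x) *\<^sub>R J y u"
    by (simp only: swap)
  then show ?thesis by (simp add: J_simps)
qed

definition der_v :: "'z \<Rightarrow> 'z \<Rightarrow> 'v \<Rightarrow> 'v" where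
  "der_v x y u = (1/4) *\<^sub>R (J x (J y u) - J y (J x u))"

definition der_z :: "'z \<Rightarrow> 'z \<Rightarrow> 'z \<Rightarrow> 'z" where
  "der_z x y q = gz x q *\<^sub>R y - gz y q *\<^sub>R x"

lemma linear_der_v: "linear (der_v x y)"
  unfolding der_v_def by (rule linearI) (simp_all add: J_simps algebra_simps)

lemma linear_der_z: "linear (der_z x y)"
  unfolding der_z_def by (rule linearI) (simp_all add: gz_simps algebra_simps)

lemma der_v_skew: "gv p (der_v x y w) = - gv (der_v x y p) w"
proof -
  have "gv p (J x (J y w)) = gv (J y (J x p)) w" "gv p (J y (J x w)) = gv (J x (J y p)) w"
    using J_skew[of p x] J_skew[of "J x p" y] J_skew[of p y] J_skew[of "J y p" x] by simp_all
  then show ?thesis unfolding der_v_def by (simp add: gv_simps algebra_simps)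
qed

lemma J_der_v_commutator:
  "J z (der_v x y u) - der_v x y (J z u) = gz z y *\<^sub>R J x u - gz z x *\<^sub>R J y u"
proof -
  have "J z (der_v x y u) - der_v x y (J z u) =
      (1/4) *\<^sub>R ((J z (J x (J y u)) - J z (J y (J x u))) - (J x (J y (J z u)) - J y (J x (J z u))))"
    unfolding der_v_def by (simp add: J_simps algebra_simps)
  also have "\<dots> = gz z y *\<^sub>R J x u - gz z x *\<^sub>R J y u"
    unfolding J_J_J[of z x y] J_J_J[of z y x]
    by (simp add: algebra_simps flip: scaleR_left_distrib)
  finally show ?thesis .
qed

lemma derivation_der_v_der_z: "H (der_v x y u) w + H u (der_v x y w) = der_z x y (H u w)"
proof (rule gz_eqI)
  fix z
  have "gz z (H (der_v x y u) w + H u (der_v x y w)) =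
      gv (J z (der_v x y u)) w + gv (J z u) (der_v x y w)"
    by (simp add: gz_simps gv_J)
  also have "\<dots> = gv (J z (der_v x y u) - der_v x y (J z u)) w"
    by (simp add: der_v_skew gv_simps)
  also have "\<dots> = gz z (der_z x y (H u w))"
    unfolding J_der_v_commutator der_z_def by (simp add: gv_simps gz_simps gv_J gz_commute[of z])
  finally show "gz z (H (der_v x y u) w + H u (der_v x y w)) = gz z (der_z x y (H u w))" .
qed

definition gz_vec :: "'z \<Rightarrow> 'z" where
  "gz_vec = (SOME W. linear W \<and> (\<forall>u w. W u \<bullet> w = gz u w))"

lemma linear_gz_vec: "linear gz_vec" and gz_vec_inner: "gz_vec x \<bullet> y = gz x y"
proof -
  obtain W where "linear W" "\<And>u w. W u \<bullet> w = gz u w"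
    using bilinear_form_inner_representation[OF bilinear_gz] by blast
  then have "\<exists>W. linear W \<and> (\<forall>u w. W u \<bullet> w = gz u w)" by blast
  then have "linear gz_vec \<and> (\<forall>u w. gz_vec u \<bullet> w = gz u w)"
    unfolding gz_vec_def by (rule someI_ex)
  then show "linear gz_vec" "gz_vec x \<bullet> y = gz x y" by blast+
qed

lemma surj_gz_vec: "surj gz_vec"
proof -
  have "inj gz_vec"
    unfolding linear_inj_iff_eq_0[OF linear_gz_vec]
    using gz_vec_inner gz_pos by (metis inner_zero_left less_irrefl)
  then show ?thesis using linear_injective_imp_surjective[OF linear_gz_vec] by simp
qed

lemma gz_inv_gz_vec: "gz (inv gz_vec y) q = y \<bullet> q"
  using gz_vec_inner[of "inv gz_vec y" q] surj_f_inv_f[OF surj_gz_vec] by simp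

lemma fat_H: "fat H"
  unfolding fat_iff_inner
proof (intro allI impI)
  fix l :: 'z and u
  assume "l \<noteq> 0" and l: "\<forall>w. l \<bullet> H u w = 0"
  define z where "z = inv gz_vec l"
  have "z \<noteq> 0"
    using \<open>l \<noteq> 0\<close> surj_f_inv_f[OF surj_gz_vec, of l] linear_0[OF linear_gz_vec] unfolding z_def by auto
  have "gv (J z u) w = 0" for w using l gv_J gz_inv_gz_vec unfolding z_def by simp
  then have "J z u = 0" using gv_eqI[of "J z u" 0] by (simp add: gv_simps)
  then have "gz z z *\<^sub>R u = 0" using J_J[of z u] by (simp add: J_simps)
  then show "u = 0" using gz_pos[OF \<open>z \<noteq> 0\<close>] by simp
qed

definition rotation_der :: "'z \<Rightarrow> 'z \<Rightarrow> ('v \<times> 'z) \<Rightarrow>\<^sub>L ('v \<times> 'z)" where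
  "rotation_der x y = Blinfun (\<lambda>p. (der_v x y (fst p), der_z x y (snd p)))"

lemma rotation_der_apply: "rotation_der x y p = (der_v x y (fst p), der_z x y (snd p))"
proof -
  have "linear (\<lambda>p::'v \<times> 'z. (der_v x y (fst p), der_z x y (snd p)))"
    by (rule linearI) (simp_all add: linear_add[OF linear_der_v] linear_add[OF linear_der_z]
        linear_scale[OF linear_der_v] linear_scale[OF linear_der_z])
  then show ?thesis
    unfolding rotation_der_def by (simp add: bounded_linear_Blinfun_apply linear_conv_bounded_linear)
qed

lemma rotation_der_in_Der: "rotation_der x y \<in> Der H"
  unfolding Der_def nil_bracket_def
  by (auto simp: rotation_der_apply linear_0[OF linear_der_v] derivation_der_v_der_z)

definition gz_skew_part :: "('z \<Rightarrow>\<^sub>L 'z) \<Rightarrow> ('z \<Rightarrow>\<^sub>L 'z)" where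
  "gz_skew_part A = (Blinfun gz_vec o\<^sub>L A) - adjoint_blinfun (Blinfun gz_vec o\<^sub>L A)"

lemma gz_skew_part_inner: "gz_skew_part A q \<bullet> r = gz (A q) r - gz (A r) q"
proof -
  have "blinfun_apply (Blinfun gz_vec) = gz_vec"
    using linear_gz_vec by (simp add: bounded_linear_Blinfun_apply linear_conv_bounded_linear)
  then show ?thesis
    unfolding gz_skew_part_def
    by (simp add: blinfun.diff_left inner_diff_left adjoint_blinfun_inner gz_vec_inner
        inner_commute[of q])
qed

lemma linear_gz_skew_part: "linear gz_skew_part"
  by (rule linearI; rule blinfun_eqI; rule vector_eq_rdotI)
     (simp_all add: gz_skew_part_inner blinfun.bilinear_simps inner_add_left gz_simps algebra_simps)

lemma dim_kernel_gz_skew_part_ge: "1 \<le> dim {A \<in> center_restrict ` Der H. gz_skew_part A = 0}"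
proof -
  let ?A = "center_restrict (dilation :: ('v \<times> 'z) \<Rightarrow>\<^sub>L _)"
  have "gz_skew_part ?A = 0"
    by (rule blinfun_eqI, rule vector_eq_rdotI)
      (simp add: gz_skew_part_inner dilation_apply gz_simps gz_commute)
  then have "?A \<in> {A \<in> center_restrict ` Der H. gz_skew_part A = 0}"
    using dilation_in_Der[of H] by blast
  moreover obtain q :: 'z where "q \<noteq> 0"
    using nonempty_Basis nonzero_Basis by blast
  then have "?A \<noteq> 0"
    by (metis center_restrict_apply dilation_apply blinfun.zero_left scaleR_eq_0_iff snd_conv
        zero_neq_numeral)
  ultimately show ?thesis
    using card_le_dim_if_independent[OF finite_independent_blinfun, of "{?A}"] by simp
qed

lemma skew_outer_in_gz_skew_part_image: "skew_outer a b \<in> gz_skew_part ` center_restrict ` Der H"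
proof -
  define x y where "x = inv gz_vec b" and "y = inv gz_vec a"
  have "gz_skew_part (center_restrict (rotation_der x y)) = 2 *\<^sub>R skew_outer a b"
    by (rule blinfun_eqI, rule vector_eq_rdotI, subst gz_skew_part_inner)
      (simp add: rotation_der_apply der_z_def gz_simps x_def y_def gz_inv_gz_vec
        skew_outer_apply blinfun.scaleR_left inner_diff_left algebra_simps inner_commute)
  then have "2 *\<^sub>R skew_outer a b \<in> gz_skew_part ` center_restrict ` Der H"
    using rotation_der_in_Der by (metis image_eqI)
  then have "(1/2) *\<^sub>R (2 *\<^sub>R skew_outer a b) \<in> gz_skew_part ` center_restrict ` Der H"
    by (rule subspace_scale[OF linear_subspace_image[OF linear_gz_skew_part
          linear_subspace_image[OF linear_center_restrict subspace_Der[OF bilinear_H]]]])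
  then show ?thesis by simp
qed

lemma dim_gz_skew_part_image_ge:
  "DIM('z) * (DIM('z) - 1) \<le> 2 * dim (gz_skew_part ` center_restrict ` Der H)"
proof -
  obtain e where e: "bij_betw e {..<DIM('z)} (Basis :: 'z set)"
    using ex_bij_betw_nat_finite[of "Basis :: 'z set"] atLeast0LessThan by auto
  define P where "P = {(k, l). k < l \<and> l < DIM('z)}"
  have "card ((\<lambda>(k, l). skew_outer (e k) (e l)) ` P) \<le> dim (gz_skew_part ` center_restrict ` Der H)"
    by (intro card_le_dim_if_independent[OF finite_independent_blinfun]
        independent_skew_outer[OF e, folded P_def]) (auto intro: skew_outer_in_gz_skew_part_image)
  then show ?thesis
    using card_image[OF independent_skew_outer(1)[OF e, folded P_def]] card_pairs_less[of "DIM('z)"]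
    unfolding P_def by simp
qed

lemma dim_center_restrict_Der_ge: "2 + DIM('z) * (DIM('z) - 1) \<le> 2 * dim (center_restrict ` Der H)"
proof -
  have W: "subspace (center_restrict ` Der H)"
    by (rule linear_subspace_image[OF linear_center_restrict subspace_Der[OF bilinear_H]])
  have "dim (center_restrict ` Der H) = dim {A \<in> center_restrict ` Der H. gz_skew_part A = 0}
      + dim (gz_skew_part ` center_restrict ` Der H)"
    by (rule dim_eq_dim_kernel_add_dim_image[OF finite_independent_blinfun finite_independent_blinfun
          W linear_gz_skew_part])
  then show ?thesis
    using dim_kernel_gz_skew_part_ge dim_gz_skew_part_image_ge by linarith
qed

end

lemma dim_Aut_quot_heisenberg:
  fixes H :: "'v::euclidean_space \<Rightarrow> 'v \<Rightarrow> 'z::euclidean_space"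
  assumes "heisenberg_type H"
  shows "dim_Aut_quot H = 1 + real DIM('z) * (real DIM('z) - 1) / 2"
proof -
  obtain gv gz J where "heisenberg_structure H gv gz J"
    using heisenberg_type_imp_structure[OF assms] by blast
  then interpret heisenberg_structure H gv gz J .
  have "2 * dim (center_restrict ` Der H) = 2 + DIM('z) * (DIM('z) - 1)"
    using dim_center_restrict_Der_le[OF bilinear_H fat_H] dim_center_restrict_Der_ge by linarith
  then have "real (2 * dim (center_restrict ` Der H)) = real (2 + DIM('z) * (DIM('z) - 1))"
    by (rule arg_cong)
  then show ?thesis
    unfolding dim_Aut_quot_eq_dim_center_restrict[OF bilinear_H fat_H]
    using real_DIM_mult_DIM_minus_1[where 'a='z] by simp
qed

text \<open>Fatness already forces \<open>z\<close> to be the whole centre and the bracket to be non-zero.\<close>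

theorem corollary2p4:
  fixes B :: "'v::euclidean_space \<Rightarrow> 'v \<Rightarrow> 'z::euclidean_space"
  assumes "skew_bilinear B"
    and "\<exists>u w. B u w \<noteq> 0"
    and "center_is_z B"
    and "fat B"
  shows "dim_Aut_quot B \<le> 1 + real DIM('z) * (real DIM('z) - 1) / 2 \<and>
         (\<forall>H :: 'v \<Rightarrow> 'v \<Rightarrow> 'z. heisenberg_type H \<longrightarrow>
           dim_Aut_quot H = 1 + real DIM('z) * (real DIM('z) - 1) / 2)"
proof
  have "bilinear B"
    using assms(1) unfolding skew_bilinear_def by blast
  then show "dim_Aut_quot B \<le> 1 + real DIM('z) * (real DIM('z) - 1) / 2"
    using dim_Aut_quot_le assms(4) by blast
  show "\<forall>H :: 'v \<Rightarrow> 'v \<Rightarrow> 'z. heisenberg_type H \<longrightarrow>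
      dim_Aut_quot H = 1 + real DIM('z) * (real DIM('z) - 1) / 2"
    using dim_Aut_quot_heisenberg by blast
qed

end
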